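(* There is no unitary $U$ on two qubits $A\otimes B$ such that for every pure qubit state $|\psi\rangle$, both one-qubit reduced states $\rho_A=\mathrm{Tr}_B\big(U(|\psi\rangle\langle\psi|\otimes|0\rangle\langle0|)U^\dagger\big)$ and $\rho_B=\mathrm{Tr}_A\big(U(|\psi\rangle\langle\psi|\otimes|0\rangle\langle0|)U^\dagger\big)$ satisfy $C_l(\rho_A)=C_l(\rho_B)=C_l(|\psi\rangle)$. (That is, without a machine/ancilla system, no unitary acting on input and blank state clones the coherence of all pure states; in particular no such unitary starting from two orthogonal states $|\psi_1\rangle,|\psi_2\rangle$ via $U|\psi_i\rangle|0\rangle=|\Psi_i\rangle$ extends to clone the coherence of every $\alpha|\psi_1\rangle+\beta|\psi_2\rangle$.)
   Context: For a qubit density matrix $\rho$, the $l_1$-norm of coherence in the computational basis is $C_l(\rho)=\sum_{i\neq j}|\langle i|\rho|j\rangle|$; for a pure state $C_l(|\phi\rangle)=C_l(|\phi\rangle\langle\phi|)$. *)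

theory Defs
  imports "HOL-Analysis.Analysis"
begin

text \<open>Two qubits A (x) B: index type 2 \<times> 2,
 where the pair (i,j) stands for the basis vector |i>_A |j>_B.\<close>

type_synonym qubit = "complex ^ 2"
type_synonym qmat = "complex ^ 2 ^ 2"
type_synonym qubits2 = "complex ^ (2 \<times> 2)"
type_synonym qmat2 = "complex ^ (2 \<times> 2) ^ (2 \<times> 2)"

definition adjoint_mat :: "complex ^ 'n ^ 'n \<Rightarrow> complex ^ 'n ^ 'n" where
  "adjoint_mat U = (\<chi> i j. cnj (U $ j $ i))"

definition unitary_mat :: "complex ^ 'n ^ 'n \<Rightarrow> bool" where
  "unitary_mat U \<longleftrightarrow> adjoint_mat U ** U = mat 1 \<and> U ** adjoint_mat U = mat 1"

definition pure_state :: "complex ^ 'n \<Rightarrow> bool" where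
  "pure_state \<psi> \<longleftrightarrow> norm \<psi> = 1"

definition proj :: "complex ^ 'n \<Rightarrow> complex ^ 'n ^ 'n" where
  "proj \<phi> = (\<chi> i j. \<phi> $ i * cnj (\<phi> $ j))"

definition tensor_vec :: "qubit \<Rightarrow> qubit \<Rightarrow> qubits2" where
  "tensor_vec \<psi> \<phi> = (\<chi> p. \<psi> $ fst p * \<phi> $ snd p)"

definition ket0 :: qubit where
  "ket0 = (\<chi> i. if i = 0 then 1 else 0)"

definition ptrace_B :: "qmat2 \<Rightarrow> qmat" where
  "ptrace_B \<rho> = (\<chi> i k. \<Sum>j\<in>UNIV. \<rho> $ (i, j) $ (k, j))"

definition ptrace_A :: "qmat2 \<Rightarrow> qmat" where
  "ptrace_A \<rho> = (\<chi> j l. \<Sum>i\<in>UNIV. \<rho> $ (i, j) $ (i, l))"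

definition l1_coherence :: "complex ^ 'n ^ 'n \<Rightarrow> real" where
  "l1_coherence \<rho> = (\<Sum>(i, j) \<in> {(i, j). i \<noteq> j}. norm (\<rho> $ i $ j))"

definition l1_coherence_pure :: "complex ^ 'n \<Rightarrow> real" where
  "l1_coherence_pure \<phi> = l1_coherence (proj \<phi>)"

end

theory Submission
  imports Defs
begin

text \<open>On input \<open>a|0\<rangle> + b|1\<rangle>\<close> the cloner outputs \<open>a u + b w\<close>, where \<open>u, w\<close> are the unit
  vectors \<open>U|00\<rangle>, U|10\<rangle>\<close>. The coherence of \<open>\<rho>\<^sub>A\<close> is twice the modulus of a sesquilinear form
  evaluated on \<open>a u + b w\<close>; demanding that it equal \<open>2|a||b|\<close> for all unit \<open>(a, b)\<close> kills
  the diagonal terms and forces the two cross terms to satisfy \<open>|r|\<^sup>2 + |s|\<^sup>2 = 1\<close>. Cauchy-Schwarz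
  bounds the cross terms by the weights of \<open>u, w\<close> on the two values of qubit A, and equality is
  only possible if \<open>u\<close> and \<open>w\<close> live on opposite values of A. The same argument for \<open>\<rho>\<^sub>B\<close>
  puts them on opposite values of B, so \<open>u, w\<close> are supported on opposite corners of the
  computational basis; but then both cross terms vanish.\<close>

lemma UNIV_2_eq: "(UNIV :: 2 set) = {0, 1}"
proof -
  have "(2 :: 2) = 0"
    by simp
  then show ?thesis
    using UNIV_2 by (metis insert_commute)
qed

lemma sum_UNIV_2: "sum f (UNIV :: 2 set) = f 0 + f 1"
  by (simp add: UNIV_2_eq)

lemma UNIV_2x2_eq: "(UNIV :: (2 \<times> 2) set) = {(0, 0), (0, 1), (1, 0), (1, 1)}"
  using UNIV_2_eq by auto

lemma sum_UNIV_2x2: "sum f (UNIV :: (2 \<times> 2) set) = f (0, 0) + f (0, 1) + f (1, 0) + f (1, 1)"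
  by (simp add: UNIV_2x2_eq add.assoc)

lemma offdiagonal_2: "{(i, j). i \<noteq> j} = {(0 :: 2, 1 :: 2), (1, 0)}"
  using UNIV_2_eq by (auto, metis UNIV_I empty_iff insert_iff)

lemma l1_coherence_2: "l1_coherence (M :: qmat) = cmod (M $ 0 $ 1) + cmod (M $ 1 $ 0)"
  unfolding l1_coherence_def offdiagonal_2 by simp

lemma l1_coherence_pure_2: "l1_coherence_pure (\<psi> :: qubit) = 2 * cmod (\<psi> $ 0) * cmod (\<psi> $ 1)"
  unfolding l1_coherence_pure_def l1_coherence_2 by (simp add: proj_def norm_mult)

lemma power2_norm_vec: "(norm (x :: complex ^ 'n))\<^sup>2 = (\<Sum>i\<in>UNIV. (cmod (x $ i))\<^sup>2)"
  by (simp add: norm_vec_def L2_set_def sum_nonneg)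

lemma proj_matrix_adjoint: "U ** proj \<phi> ** adjoint_mat U = proj (U *v \<phi>)"
  by (simp add: vec_eq_iff matrix_matrix_mult_def proj_def adjoint_mat_def
      matrix_vector_mult_def sum_distrib_left sum_distrib_right mult_ac)

lemma unitary_mat_column_norm:
  assumes "unitary_mat U"
  shows "norm (column j U) = 1"
proof -
  have "complex_of_real ((norm (column j U))\<^sup>2) = (adjoint_mat U ** U) $ j $ j"
    by (simp add: power2_norm_vec column_def matrix_matrix_mult_def adjoint_mat_def
        complex_norm_square mult.commute del: of_real_power)
  also have "\<dots> = 1"
    using assms by (simp add: unitary_mat_def mat_def)
  finally have "(norm (column j U))\<^sup>2 = 1"
    by (simp del: of_real_power)
  then show ?thesis
    using norm_ge_zero[of "column j U"] by (auto simp: power2_eq_1_iff)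
qed

lemma matrix_vector_tensor_ket0:
  "U *v tensor_vec \<psi> ket0 = \<psi> $ 0 *s column (0, 0) U + \<psi> $ 1 *s column (1, 0) U"
  by (simp add: vec_eq_iff matrix_vector_mult_def column_def tensor_vec_def ket0_def
      sum_UNIV_2x2 mult_ac)

lemma cmod_sum_mult_cnj_le:
  "(cmod (\<Sum>i\<in>I. f i * cnj (g i)))\<^sup>2 \<le> (\<Sum>i\<in>I. (cmod (f i))\<^sup>2) * (\<Sum>i\<in>I. (cmod (g i))\<^sup>2)"
proof -
  have "cmod (\<Sum>i\<in>I. f i * cnj (g i)) \<le> (\<Sum>i\<in>I. cmod (f i) * cmod (g i))"
    by (metis (no_types, lifting) complex_mod_cnj norm_mult norm_sum sum.cong)
  then have "(cmod (\<Sum>i\<in>I. f i * cnj (g i)))\<^sup>2 \<le> (\<Sum>i\<in>I. cmod (f i) * cmod (g i))\<^sup>2"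
    by (simp add: power_mono)
  also have "\<dots> \<le> (\<Sum>i\<in>I. (cmod (f i))\<^sup>2) * (\<Sum>i\<in>I. (cmod (g i))\<^sup>2)"
    by (rule Cauchy_Schwarz_ineq_sum)
  finally show ?thesis .
qed

lemma parallelogram_cmod: "(cmod (x + y))\<^sup>2 + (cmod (x - y))\<^sup>2 = 2 * ((cmod x)\<^sup>2 + (cmod y)\<^sup>2)"
  by (simp only: cmod_power2) (simp add: power2_eq_square algebra_simps)

text \<open>The test vectors \<open>(3/5, 4/5)\<close> and \<open>(3/5, 4\<i>/5)\<close> give \<open>|r + s| = |r - s| = 1\<close>.\<close>

lemma sesquilinear_cross_terms:
  fixes p q r s :: complex
  assumes coh: "\<And>a b. (cmod a)\<^sup>2 + (cmod b)\<^sup>2 = 1 \<Longrightarrow>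
      cmod (a * cnj a * p + b * cnj b * q + a * cnj b * r + b * cnj a * s) = cmod a * cmod b"
  shows "p = 0" and "q = 0" and "(cmod r)\<^sup>2 + (cmod s)\<^sup>2 = 1"
proof -
  show p: "p = 0"
    using coh[of 1 0] by simp
  show q: "q = 0"
    using coh[of 0 1] by simp
  have real_mix: "3/5 * cnj (3/5) * p + 4/5 * cnj (4/5) * q + 3/5 * cnj (4/5) * r + 4/5 * cnj (3/5) * s
      = 12/25 * (r + s)"
    by (simp add: p q algebra_simps)
  have "(cmod (3/5 :: complex))\<^sup>2 + (cmod (4/5 :: complex))\<^sup>2 = 1"
    by (simp add: power2_eq_square)
  from coh[OF this, unfolded real_mix] have "cmod (r + s) = 1"
    by (simp only: norm_mult) simp
  moreover have imaginary_mix: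
    "3/5 * cnj (3/5) * p + 4/5 * \<i> * cnj (4/5 * \<i>) * q + 3/5 * cnj (4/5 * \<i>) * r + 4/5 * \<i> * cnj (3/5) * s
      = 12/25 * \<i> * (s - r)"
    by (simp add: p q algebra_simps)
  have "(cmod (3/5 :: complex))\<^sup>2 + (cmod (4/5 * \<i>))\<^sup>2 = 1"
    by (simp add: power2_eq_square norm_mult)
  from coh[OF this, unfolded imaginary_mix] have "cmod (r - s) = 1"
    by (simp only: norm_mult norm_minus_commute) simp
  ultimately show "(cmod r)\<^sup>2 + (cmod s)\<^sup>2 = 1"
    using parallelogram_cmod[of r s] by simp
qed

lemma complementary_weights_extremal:
  fixes A D :: real
  assumes "0 \<le> A" "A \<le> 1" "0 \<le> D" "D \<le> 1" "1 \<le> A * D + (1 - A) * (1 - D)"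
  shows "A = D \<and> (A = 0 \<or> A = 1)"
proof -
  have "A * (1 - D) + D * (1 - A) \<le> 0"
    using assms(5) by (simp add: algebra_simps)
  moreover have "0 \<le> A * (1 - D)" "0 \<le> D * (1 - A)"
    using assms(1-4) by simp_all
  ultimately have "A * (1 - D) = 0" "D * (1 - A) = 0"
    by linarith+
  then show ?thesis
    by auto
qed

text \<open>With \<open>x\<^sub>i\<close> the state of B in the component of \<open>x\<close> where A is \<open>|i\<rangle>\<close>, \<open>slice_inner x y\<close>
  is \<open>\<langle>y\<^sub>1|x\<^sub>0\<rangle>\<close> and \<open>slice_norm i x\<close> is \<open>\<parallel>x\<^sub>i\<parallel>\<^sup>2\<close>.\<close>

definition slice_inner :: "qubits2 \<Rightarrow> qubits2 \<Rightarrow> complex" where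
  "slice_inner x y = (\<Sum>j\<in>UNIV. x $ (0, j) * cnj (y $ (1, j)))"

definition slice_norm :: "2 \<Rightarrow> qubits2 \<Rightarrow> real" where
  "slice_norm i x = (\<Sum>j\<in>UNIV. (cmod (x $ (i, j)))\<^sup>2)"

definition swap_qubits :: "qubits2 \<Rightarrow> qubits2" where
  "swap_qubits x = (\<chi> p. x $ (snd p, fst p))"

lemma l1_coherence_ptrace_B_proj: "l1_coherence (ptrace_B (proj x)) = 2 * cmod (slice_inner x x)"
proof -
  have "ptrace_B (proj x) $ 0 $ 1 = slice_inner x x"
    and "ptrace_B (proj x) $ 1 $ 0 = cnj (slice_inner x x)"
    by (simp_all add: ptrace_B_def proj_def slice_inner_def mult.commute)
  then show ?thesis
    unfolding l1_coherence_2 by simp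
qed

lemma ptrace_A_proj_swap: "ptrace_A (proj x) = ptrace_B (proj (swap_qubits x))"
  by (simp add: vec_eq_iff ptrace_A_def ptrace_B_def proj_def swap_qubits_def)

lemma swap_qubits_combination: "swap_qubits (a *s u + b *s w) = a *s swap_qubits u + b *s swap_qubits w"
  by (simp add: vec_eq_iff swap_qubits_def)

lemma norm_swap_qubits: "norm (swap_qubits x) = norm x"
  by (simp add: norm_vec_def L2_set_def sum_UNIV_2x2 swap_qubits_def add_ac)

lemma slice_inner_combination:
  "slice_inner (a *s u + b *s w) (a *s u + b *s w) =
     a * cnj a * slice_inner u u + b * cnj b * slice_inner w w +
     a * cnj b * slice_inner u w + b * cnj a * slice_inner w u"
  by (simp add: slice_inner_def sum_UNIV_2 algebra_simps)

lemma slice_inner_Cauchy_Schwarz: "(cmod (slice_inner x y))\<^sup>2 \<le> slice_norm 0 x * slice_norm 1 y"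
  unfolding slice_inner_def slice_norm_def by (rule cmod_sum_mult_cnj_le)

lemma slice_norm_nonneg: "0 \<le> slice_norm i x"
  by (simp add: slice_norm_def sum_nonneg)

lemma slice_norm_eq_0_iff: "slice_norm i x = 0 \<longleftrightarrow> (\<forall>j. x $ (i, j) = 0)"
  by (simp add: slice_norm_def sum_nonneg_eq_0_iff)

lemma slice_norms_sum: "slice_norm 0 x + slice_norm 1 x = (norm x)\<^sup>2"
  by (simp add: power2_norm_vec slice_norm_def sum_UNIV_2 sum_UNIV_2x2 add_ac)

definition opposite_slices :: "qubits2 \<Rightarrow> qubits2 \<Rightarrow> bool" where
  "opposite_slices u w \<longleftrightarrow>
     slice_norm 1 u = 0 \<and> slice_norm 0 w = 0 \<or> slice_norm 0 u = 0 \<and> slice_norm 1 w = 0"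

lemma opposite_slices_commute: "opposite_slices u w \<longleftrightarrow> opposite_slices w u"
  unfolding opposite_slices_def by blast

lemma slice_coherence_separates:
  assumes "norm u = 1" and "norm w = 1"
    and coh: "\<And>a b. (cmod a)\<^sup>2 + (cmod b)\<^sup>2 = 1 \<Longrightarrow>
      cmod (slice_inner (a *s u + b *s w) (a *s u + b *s w)) = cmod a * cmod b"
  shows "(cmod (slice_inner u w))\<^sup>2 + (cmod (slice_inner w u))\<^sup>2 = 1"
    and "opposite_slices u w"
proof -
  show cross: "(cmod (slice_inner u w))\<^sup>2 + (cmod (slice_inner w u))\<^sup>2 = 1"
    by (rule sesquilinear_cross_terms(3)[OF coh[unfolded slice_inner_combination]])
  have u1: "slice_norm 1 u = 1 - slice_norm 0 u" and w0: "slice_norm 0 w = 1 - slice_norm 1 w"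
    using slice_norms_sum[of u] slice_norms_sum[of w] assms(1,2) by simp_all
  have "1 \<le> slice_norm 0 u * slice_norm 1 w + (1 - slice_norm 0 u) * (1 - slice_norm 1 w)"
    using cross slice_inner_Cauchy_Schwarz[of u w] slice_inner_Cauchy_Schwarz[of w u]
    unfolding u1 w0 by (simp add: algebra_simps)
  then have "slice_norm 0 u = slice_norm 1 w \<and> (slice_norm 0 u = 0 \<or> slice_norm 0 u = 1)"
    using slice_norm_nonneg[of 0 u] slice_norm_nonneg[of 1 u] slice_norm_nonneg[of 0 w]
      slice_norm_nonneg[of 1 w] u1 w0
    by (intro complementary_weights_extremal) linarith+
  then show "opposite_slices u w"
    unfolding opposite_slices_def u1 w0 by auto
qed

lemma slice_inner_eq_0_if_opposite_corners:
  assumes "opposite_slices u w" and "opposite_slices (swap_qubits u) (swap_qubits w)"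
  shows "slice_inner u w = 0"
  using assms
  by (auto simp: opposite_slices_def slice_norm_eq_0_iff swap_qubits_def slice_inner_def sum_UNIV_2)

theorem theorem2:
  shows "\<not> (\<exists>U :: qmat2. unitary_mat U \<and>
            (\<forall>\<psi> :: qubit. pure_state \<psi> \<longrightarrow>
               (let \<rho> = U ** proj (tensor_vec \<psi> ket0) ** adjoint_mat U
                in l1_coherence (ptrace_B \<rho>) = l1_coherence_pure \<psi> \<and>
                   l1_coherence (ptrace_A \<rho>) = l1_coherence_pure \<psi>)))"
proof
  assume "\<exists>U :: qmat2. unitary_mat U \<and>
            (\<forall>\<psi> :: qubit. pure_state \<psi> \<longrightarrow>
               (let \<rho> = U ** proj (tensor_vec \<psi> ket0) ** adjoint_mat U
                in l1_coherence (ptrace_B \<rho>) = l1_coherence_pure \<psi> \<and>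
                   l1_coherence (ptrace_A \<rho>) = l1_coherence_pure \<psi>))"
  then obtain U :: qmat2 where unitary: "unitary_mat U" and clones:
    "\<And>\<psi>. pure_state \<psi> \<Longrightarrow>
       l1_coherence (ptrace_B (proj (U *v tensor_vec \<psi> ket0))) = l1_coherence_pure \<psi> \<and>
       l1_coherence (ptrace_A (proj (U *v tensor_vec \<psi> ket0))) = l1_coherence_pure \<psi>"
    by (auto simp: proj_matrix_adjoint Let_def)
  define u w where "u = column (0, 0) U" and "w = column (1, 0) U"
  have coh: "cmod (slice_inner (a *s u + b *s w) (a *s u + b *s w)) = cmod a * cmod b \<and>
      cmod (slice_inner (a *s swap_qubits u + b *s swap_qubits w)
        (a *s swap_qubits u + b *s swap_qubits w)) = cmod a * cmod b"
    if "(cmod a)\<^sup>2 + (cmod b)\<^sup>2 = 1" for a b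
  proof -
    define \<psi> :: qubit where "\<psi> = (\<chi> i. if i = 0 then a else b)"
    have "pure_state \<psi>"
      using that by (simp add: pure_state_def norm_vec_def L2_set_def sum_UNIV_2 \<psi>_def)
    then show ?thesis
      using clones[of \<psi>]
      by (simp add: matrix_vector_tensor_ket0 l1_coherence_ptrace_B_proj ptrace_A_proj_swap
          swap_qubits_combination l1_coherence_pure_2 \<psi>_def u_def w_def)
  qed
  have norms: "norm u = 1" "norm w = 1"
    using unitary_mat_column_norm[OF unitary] by (simp_all add: u_def w_def)
  note rows = slice_coherence_separates[OF norms, OF conjunct1[OF coh]]
  note columns = slice_coherence_separates[of "swap_qubits u" "swap_qubits w",
      unfolded norm_swap_qubits, OF norms, OF conjunct2[OF coh]]
  have "slice_inner u w = 0" and "slice_inner w u = 0"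
    using rows(2) columns(2)
    by (auto intro: slice_inner_eq_0_if_opposite_corners simp: opposite_slices_commute)
  with rows(1) show False
    by simp
qed

end
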